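(* Let $p\geq 3$. Every $p$-regular hamiltonian graph is linked to a $p$-hamiltonian graph. Every $p$-regular hamiltonian 3-edge-connected graph is 3-linked to a 3-edge-connected $p$-hamiltonian graph.
   Context: All graphs are finite and connected; loops and multiple edges are allowed. Valency counts half-edges (a loop counts twice); $p$-regular means every vertex has valency $p$. A graph is hamiltonian if it has at least 2 vertices and contains a cycle (connected 2-regular subgraph) through every vertex; $p$-hamiltonian means $p$-regular, hamiltonian and loopless. $\Gamma/e$ denotes contraction of the edge $e$. Strongly linked: there are non-loop edges $e_i\in E(\Gamma_i)$ and an isomorphism $\Gamma_1/e_1\cong\Gamma_2/e_2$ carrying the image vertex of $e_1$ to that of $e_2$. Linked: joined by a finite chain of consecutively strongly linked graphs. 3-edge-connected: at least one vertex and connected after removal of any fewer than 3 edges. 3-linked: linked through a chain of 3-edge-connected graphs. *)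

theory Defs
  imports Main
begin

text \<open>Finite multigraphs (loops and multiple edges allowed). Each edge has an
  (unordered) pair of end vertices, stored as an ordered pair whose order is irrelevant.\<close>

record ('v, 'e) mgraph =
  verts :: "'v set"
  edges :: "'e set"
  ends  :: "'e \<Rightarrow> 'v \<times> 'v"

definition is_loop :: "('v, 'e) mgraph \<Rightarrow> 'e \<Rightarrow> bool" where
  "is_loop G e \<longleftrightarrow> fst (ends G e) = snd (ends G e)"

definition adj_rel :: "('v, 'e) mgraph \<Rightarrow> 'e set \<Rightarrow> ('v \<times> 'v) set" where
  "adj_rel G C = {(a, b). \<exists>e\<in>C. ends G e = (a, b) \<or> ends G e = (b, a)}"

definition connected_via :: "('v, 'e) mgraph \<Rightarrow> 'e set \<Rightarrow> bool" where
  "connected_via G C \<longleftrightarrow> (\<forall>u\<in>verts G. \<forall>v\<in>verts G. (u, v) \<in> (adj_rel G C)\<^sup>*)"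

definition is_graph :: "('v, 'e) mgraph \<Rightarrow> bool" where
  "is_graph G \<longleftrightarrow> finite (verts G) \<and> verts G \<noteq> {} \<and> finite (edges G) \<and>
     (\<forall>e\<in>edges G. fst (ends G e) \<in> verts G \<and> snd (ends G e) \<in> verts G) \<and>
     connected_via G (edges G)"

text \<open>Valency of v with respect to an edge set C (half-edges; a loop counts twice).\<close>
definition valency_in :: "('v, 'e) mgraph \<Rightarrow> 'e set \<Rightarrow> 'v \<Rightarrow> nat" where
  "valency_in G C v = card {e\<in>C. fst (ends G e) = v} + card {e\<in>C. snd (ends G e) = v}"

definition valency :: "('v, 'e) mgraph \<Rightarrow> 'v \<Rightarrow> nat" where
  "valency G v = valency_in G (edges G) v"

definition regular :: "nat \<Rightarrow> ('v, 'e) mgraph \<Rightarrow> bool" where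
  "regular p G \<longleftrightarrow> (\<forall>v\<in>verts G. valency G v = p)"

definition loopless :: "('v, 'e) mgraph \<Rightarrow> bool" where
  "loopless G \<longleftrightarrow> (\<forall>e\<in>edges G. \<not> is_loop G e)"

definition hamiltonian :: "('v, 'e) mgraph \<Rightarrow> bool" where
  "hamiltonian G \<longleftrightarrow> 2 \<le> card (verts G) \<and>
     (\<exists>C \<subseteq> edges G. connected_via G C \<and> (\<forall>v\<in>verts G. valency_in G C v = 2))"

definition p_hamiltonian :: "nat \<Rightarrow> ('v, 'e) mgraph \<Rightarrow> bool" where
  "p_hamiltonian p G \<longleftrightarrow> regular p G \<and> hamiltonian G \<and> loopless G"

definition contract :: "('v, 'e) mgraph \<Rightarrow> 'e \<Rightarrow> ('v, 'e) mgraph" where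
  "contract G e =
     (let u = fst (ends G e); v = snd (ends G e);
          rn = (\<lambda>w. if w = v then u else w)
      in \<lparr>verts = verts G - {v}, edges = edges G - {e},
          ends = (\<lambda>x. (rn (fst (ends G x)), rn (snd (ends G x))))\<rparr>)"

definition contract_vertex :: "('v, 'e) mgraph \<Rightarrow> 'e \<Rightarrow> 'v" where
  "contract_vertex G e = fst (ends G e)"

definition graph_iso :: "('v, 'e) mgraph \<Rightarrow> ('w, 'd) mgraph \<Rightarrow> ('v \<Rightarrow> 'w) \<Rightarrow> ('e \<Rightarrow> 'd) \<Rightarrow> bool" where
  "graph_iso G H f g \<longleftrightarrow> bij_betw f (verts G) (verts H) \<and> bij_betw g (edges G) (edges H) \<and>
     (\<forall>e\<in>edges G. ends H (g e) = (f (fst (ends G e)), f (snd (ends G e))) \<or>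
                   ends H (g e) = (f (snd (ends G e)), f (fst (ends G e))))"

definition strongly_linked :: "('v, 'e) mgraph \<Rightarrow> ('v, 'e) mgraph \<Rightarrow> bool" where
  "strongly_linked G1 G2 \<longleftrightarrow>
     (\<exists>e1\<in>edges G1. \<exists>e2\<in>edges G2. \<not> is_loop G1 e1 \<and> \<not> is_loop G2 e2 \<and>
        (\<exists>f g. graph_iso (contract G1 e1) (contract G2 e2) f g \<and>
               f (contract_vertex G1 e1) = contract_vertex G2 e2))"

definition linked :: "('v, 'e) mgraph \<Rightarrow> ('v, 'e) mgraph \<Rightarrow> bool" where
  "linked G H \<longleftrightarrow> is_graph G \<and> is_graph H \<and>
     (\<lambda>A B. is_graph A \<and> is_graph B \<and> strongly_linked A B)\<^sup>*\<^sup>* G H"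

definition three_edge_connected :: "('v, 'e) mgraph \<Rightarrow> bool" where
  "three_edge_connected G \<longleftrightarrow> verts G \<noteq> {} \<and>
     (\<forall>F \<subseteq> edges G. card F < 3 \<longrightarrow> connected_via G (edges G - F))"

definition three_linked :: "('v, 'e) mgraph \<Rightarrow> ('v, 'e) mgraph \<Rightarrow> bool" where
  "three_linked G H \<longleftrightarrow> is_graph G \<and> is_graph H \<and> three_edge_connected G \<and> three_edge_connected H \<and>
     (\<lambda>A B. is_graph A \<and> is_graph B \<and> three_edge_connected A \<and> three_edge_connected B \<and>
            strongly_linked A B)\<^sup>*\<^sup>* G H"

end

theory Submission
  imports Defs
begin

(* We remove the loops of G one at a time, each time passing to a graph that
   is strongly linked to the previous one and is again a p-regular hamiltonian graph.
   Let l be a loop at v, let e = vw be an edge of a hamiltonian cycle C, and let h be an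
   edge at w outside C whose other end u differs from v (a counting argument at v and w
   shows it exists).  Re-attach l as an edge vw and h as an edge vu.  All valencies are
   unchanged, C is untouched, the number of loops drops, and contracting e identifies v
   with w, so both graphs have the same contraction by e: they are strongly linked.  The
   move also preserves 3-edge-connectivity. *)

definition incidence :: "('v, 'e) mgraph \<Rightarrow> 'e \<Rightarrow> 'v \<Rightarrow> nat" where
  "incidence G x a = (if fst (ends G x) = a then 1 else 0) + (if snd (ends G x) = a then 1 else 0)"

definition other_end :: "('v, 'e) mgraph \<Rightarrow> 'e \<Rightarrow> 'v \<Rightarrow> 'v" where
  "other_end G x a = (if fst (ends G x) = a then snd (ends G x) else fst (ends G x))"

definition loop_count :: "('v, 'e) mgraph \<Rightarrow> nat" where
  "loop_count G = card {x \<in> edges G. is_loop G x}"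

lemma valency_in_sum: "finite E \<Longrightarrow> valency_in G E a = (\<Sum>x\<in>E. incidence G x a)"
  unfolding valency_in_def incidence_def
  by (simp add: sum.distrib sum.inter_filter[symmetric])

lemma valency_in_cong:
  assumes "\<And>x. x \<in> E \<Longrightarrow> ends G' x = ends G x"
  shows "valency_in G' E a = valency_in G E a"
  unfolding valency_in_def using assms by (metis (no_types, lifting) Collect_cong)

lemma valency_in_local_change:
  assumes "finite E" "L \<subseteq> E" "\<And>x. x \<in> E - L \<Longrightarrow> ends G' x = ends G x"
    and "(\<Sum>x\<in>L. incidence G' x a) = (\<Sum>x\<in>L. incidence G x a)"
  shows "valency_in G' E a = valency_in G E a"
proof -
  have "(\<Sum>x\<in>E - L. incidence G' x a) = (\<Sum>x\<in>E - L. incidence G x a)"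
    using assms(3) unfolding incidence_def by simp
  then show ?thesis
    unfolding valency_in_sum[OF assms(1)] sum.subset_diff[OF assms(2,1)] using assms(4) by simp
qed

lemma adj_rel_cong:
  assumes "\<And>x. x \<in> E \<Longrightarrow> ends G' x = ends G x"
  shows "adj_rel G' E = adj_rel G E"
  unfolding adj_rel_def using assms by auto

lemma ends_in_adj_rel: "x \<in> E \<Longrightarrow> ends G x \<in> adj_rel G E"
  unfolding adj_rel_def by (cases "ends G x") auto

lemma adj_rel_rtrancl_sym: "(a, b) \<in> (adj_rel G E)\<^sup>* \<Longrightarrow> (b, a) \<in> (adj_rel G E)\<^sup>*"
proof -
  have "(adj_rel G E)\<inverse> = adj_rel G E" unfolding adj_rel_def by auto
  then show "(a, b) \<in> (adj_rel G E)\<^sup>* \<Longrightarrow> (b, a) \<in> (adj_rel G E)\<^sup>*"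
    by (metis rtrancl_converseI)
qed

lemma connected_via_transfer:
  assumes "connected_via G A" "\<And>x. x \<in> A \<Longrightarrow> ends G x \<in> (adj_rel G' B)\<^sup>*"
    and "verts G' = verts G"
  shows "connected_via G' B"
proof -
  have "adj_rel G A \<subseteq> (adj_rel G' B)\<^sup>*"
  proof
    fix p assume "p \<in> adj_rel G A"
    then obtain a b x where "p = (a, b)" "x \<in> A" "ends G x = (a, b) \<or> ends G x = (b, a)"
      unfolding adj_rel_def by auto
    then show "p \<in> (adj_rel G' B)\<^sup>*" using assms(2) adj_rel_rtrancl_sym by metis
  qed
  then have "(adj_rel G A)\<^sup>* \<subseteq> (adj_rel G' B)\<^sup>*" by (rule rtrancl_subset_rtrancl)
  then show ?thesis using assms(1,3) unfolding connected_via_def by blast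
qed

lemma card_exchange_lt_3:
  assumes "finite F" "card F < 3" "\<not> (l \<notin> F \<and> h \<notin> F \<and> card F = 2)"
  shows "card (insert h (F - {l})) < 3"
  using assms by (auto simp: card_insert_if card_Diff_singleton_if split: if_splits)

locale loop_shift =
  fixes G :: "('v, 'e) mgraph" and l e h :: 'e and v w :: 'v
  assumes graph: "is_graph G"
    and l_edge: "l \<in> edges G" and l_ends: "ends G l = (v, v)"
    and e_edge: "e \<in> edges G" and e_ends: "ends G e = (v, w) \<or> ends G e = (w, v)"
    and v_ne_w: "v \<noteq> w"
    and h_edge: "h \<in> edges G" and e_ne_h: "e \<noteq> h"
    and h_at_w: "fst (ends G h) = w \<or> snd (ends G h) = w" and h_far: "other_end G h w \<noteq> v"
begin

definition shifted :: "('v, 'e) mgraph" where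
  "shifted = G\<lparr>ends := (ends G)(l := (v, w), h := (v, other_end G h w))\<rparr>"

lemma h_ends: "ends G h = (w, other_end G h w) \<or> ends G h = (other_end G h w, w)"
  using h_at_w unfolding other_end_def by (cases "ends G h") auto

lemma l_ne_h: "l \<noteq> h" using l_ends h_at_w v_ne_w by auto

lemma e_ne_l: "e \<noteq> l" using l_ends e_ends v_ne_w by auto

lemma finite_edges: "finite (edges G)" using graph unfolding is_graph_def by auto

lemma shifted_verts [simp]: "verts shifted = verts G"
  and shifted_edges [simp]: "edges shifted = edges G"
  unfolding shifted_def by auto

lemma shifted_l: "ends shifted l = (v, w)"
  and shifted_h: "ends shifted h = (v, other_end G h w)"
  unfolding shifted_def using l_ne_h by auto

lemma shifted_other: "x \<noteq> l \<Longrightarrow> x \<noteq> h \<Longrightarrow> ends shifted x = ends G x"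
  unfolding shifted_def by auto

text \<open>Every old edge other than h keeps its ends, except l, which was a loop and so
  joins a vertex to itself: its ends stay joined in any edge set B containing it.\<close>
lemma old_edge_reachable:
  assumes "x \<in> insert l B" "x \<noteq> h"
  shows "ends G x \<in> (adj_rel shifted B)\<^sup>*"
proof (cases "x = l")
  case True then show ?thesis using l_ends by simp
next
  case False
  then have "ends G x = ends shifted x" using assms(2) shifted_other by simp
  then show ?thesis using assms(1) False ends_in_adj_rel by (metis insertE r_into_rtrancl)
qed

text \<open>The old edge h, from w to u, is replaced by the walk w - v - u via l and h.\<close>
lemma h_reachable:
  assumes "l \<in> B" "h \<in> B"
  shows "ends G h \<in> (adj_rel shifted B)\<^sup>*"
proof -
  have "(w, v) \<in> adj_rel shifted B" "(v, other_end G h w) \<in> adj_rel shifted B"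
    using assms shifted_l shifted_h unfolding adj_rel_def by auto
  then have "(w, other_end G h w) \<in> (adj_rel shifted B)\<^sup>*" by auto
  then show ?thesis using h_ends adj_rel_rtrancl_sym by metis
qed

lemma edge_reachable: "x \<in> edges G \<Longrightarrow> ends G x \<in> (adj_rel shifted (edges G))\<^sup>*"
  using old_edge_reachable h_reachable l_edge h_edge by blast

lemma shifted_graph: "is_graph shifted"
proof -
  have ends_in: "\<forall>x\<in>edges G. fst (ends G x) \<in> verts G \<and> snd (ends G x) \<in> verts G"
    using graph unfolding is_graph_def by auto
  have "v \<in> verts G" "w \<in> verts G" "other_end G h w \<in> verts G"
    using ends_in l_edge l_ends e_edge e_ends h_edge h_ends by force+
  then have "fst (ends shifted x) \<in> verts shifted \<and> snd (ends shifted x) \<in> verts shifted"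
    if "x \<in> edges shifted" for x
    using that ends_in shifted_l shifted_h shifted_other[of x] by (cases "x = l \<or> x = h") auto
  moreover have "connected_via G (edges G)" using graph unfolding is_graph_def by simp
  then have "connected_via shifted (edges G)"
    using edge_reachable by (rule connected_via_transfer) simp_all
  ultimately show ?thesis using graph unfolding is_graph_def by simp
qed

lemma shifted_hamiltonian:
  assumes "2 \<le> card (verts G)" "C \<subseteq> edges G" "l \<notin> C" "h \<notin> C"
    and "connected_via G C" "\<forall>x\<in>verts G. valency_in G C x = 2"
  shows "hamiltonian shifted"
proof -
  have same: "\<And>x. x \<in> C \<Longrightarrow> ends shifted x = ends G x"
    using assms(3,4) shifted_other by metis
  have "connected_via shifted C"
    using assms(5) adj_rel_cong[OF same] unfolding connected_via_def by simp
  moreover have "\<forall>x\<in>verts shifted. valency_in shifted C x = 2"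
    using assms(6) valency_in_cong[OF same] by simp
  ultimately show ?thesis unfolding hamiltonian_def using assms(1,2) by auto
qed

text \<open>Both l and h keep one half-edge at v; the other half-edge of l moves from v to w
  and that of h from w to v.\<close>
lemma shifted_valency: "valency shifted a = valency G a"
  unfolding valency_def shifted_edges
proof (rule valency_in_local_change[OF finite_edges])
  show "{l, h} \<subseteq> edges G" using l_edge h_edge by simp
  show "ends shifted x = ends G x" if "x \<in> edges G - {l, h}" for x
    using that shifted_other by simp
  have "incidence shifted l a + incidence shifted h a = incidence G l a + incidence G h a"
    using h_ends unfolding incidence_def shifted_l shifted_h l_ends by (elim disjE) simp_all
  then show "(\<Sum>x\<in>{l, h}. incidence shifted x a) = (\<Sum>x\<in>{l, h}. incidence G x a)"
    using l_ne_h by simp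
qed

lemma shifted_regular: "regular p G \<Longrightarrow> regular p shifted"
  unfolding regular_def using shifted_valency by simp

text \<open>The loop l disappears and no new loop appears, since v \<noteq> w and h's other end is
  not v.\<close>
lemma shifted_fewer_loops: "loop_count shifted < loop_count G"
proof -
  have "{x \<in> edges shifted. is_loop shifted x} \<subseteq> {x \<in> edges G. is_loop G x} - {l}"
  proof (intro subsetI)
    fix x assume "x \<in> {x \<in> edges shifted. is_loop shifted x}"
    then show "x \<in> {x \<in> edges G. is_loop G x} - {l}"
      using shifted_l shifted_h shifted_other[of x] v_ne_w h_far unfolding is_loop_def
      by (cases "x = l \<or> x = h") auto
  qed
  moreover have "l \<in> {x \<in> edges G. is_loop G x}" using l_edge l_ends unfolding is_loop_def by auto
  moreover have "finite {x \<in> edges G. is_loop G x}" using finite_edges by auto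
  ultimately show ?thesis unfolding loop_count_def
    by (meson card_Diff1_less card_mono finite_Diff le_less_trans)
qed

text \<open>Contracting e merges v and w, after which l and h have the same ends in both
  graphs: the identity is an isomorphism of the contractions.\<close>
lemma strongly_linked_shifted: "strongly_linked G shifted"
  unfolding strongly_linked_def
proof (intro bexI conjI exI)
  have e_same: "ends shifted e = ends G e" using shifted_other e_ne_l e_ne_h by simp
  show "e \<in> edges G" "e \<in> edges shifted" using e_edge by auto
  show "\<not> is_loop G e" "\<not> is_loop shifted e"
    using e_ends v_ne_w e_same unfolding is_loop_def by auto
  show "id (contract_vertex G e) = contract_vertex shifted e"
    using e_same unfolding contract_vertex_def by simp
  define r where "r = (\<lambda>x. if x = snd (ends G e) then fst (ends G e) else x)"
  have r_vw: "r v = r w" using e_ends v_ne_w unfolding r_def by (elim disjE) simp_all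
  have contract_ends: "\<And>x. ends (contract G e) x = (r (fst (ends G x)), r (snd (ends G x)))"
      "\<And>x. ends (contract shifted e) x = (r (fst (ends shifted x)), r (snd (ends shifted x)))"
    and contract_same: "verts (contract shifted e) = verts (contract G e)"
      "edges (contract shifted e) = edges (contract G e)"
    unfolding contract_def Let_def r_def e_same by simp_all
  have "ends (contract shifted e) x = (r (fst (ends G x)), r (snd (ends G x))) \<or>
        ends (contract shifted e) x = (r (snd (ends G x)), r (fst (ends G x)))" for x
    using contract_ends(2) shifted_l shifted_h shifted_other l_ends h_ends r_vw
    by (cases "x = l"; cases "x = h") auto
  then show "graph_iso (contract G e) (contract shifted e) id id"
    unfolding graph_iso_def using contract_ends(1) contract_same by (simp add: bij_betw_id)
qed

text \<open>Removing a set F of at most two edges: if F avoids l and h, the walk w - v - u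
  replaces h; otherwise F' = (F - {l}) \<union> {h} has fewer than three edges, so G - F' is
  connected, and its edges other than the loop l keep their ends after the shift.\<close>
lemma shifted_three_edge_connected:
  assumes "three_edge_connected G"
  shows "three_edge_connected shifted"
  unfolding three_edge_connected_def
proof (intro conjI allI impI)
  have cut: "\<And>F. F \<subseteq> edges G \<Longrightarrow> card F < 3 \<Longrightarrow> connected_via G (edges G - F)"
    using assms unfolding three_edge_connected_def by blast
  show "verts shifted \<noteq> {}" using assms unfolding three_edge_connected_def by simp
  fix F assume F: "F \<subseteq> edges shifted" "card F < 3"
  then have F_sub: "F \<subseteq> edges G" and F_fin: "finite F"
    using finite_edges finite_subset by auto
  show "connected_via shifted (edges shifted - F)"
  proof (cases "l \<notin> F \<and> h \<notin> F \<and> card F = 2")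
    case True
    have "ends G x \<in> (adj_rel shifted (edges G - F))\<^sup>*" if "x \<in> edges G - F" for x
    proof (cases "x = h")
      case True
      then show ?thesis using \<open>l \<notin> F \<and> h \<notin> F \<and> card F = 2\<close> l_edge h_edge h_reachable by simp
    next
      case False
      then show ?thesis using that old_edge_reachable by blast
    qed
    with cut[OF F_sub F(2)] have "connected_via shifted (edges G - F)"
      by (rule connected_via_transfer) simp_all
    then show ?thesis by simp
  next
    case False
    let ?F' = "insert h (F - {l})"
    have "?F' \<subseteq> edges G" using F_sub h_edge by blast
    then have "connected_via G (edges G - ?F')"
      using cut card_exchange_lt_3[OF F_fin F(2) False] by blast
    moreover have "ends G x \<in> (adj_rel shifted (edges G - F))\<^sup>*" if "x \<in> edges G - ?F'" for x
      using that by (intro old_edge_reachable) auto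
    ultimately have "connected_via shifted (edges G - F)"
      by (rule connected_via_transfer) simp_all
    then show ?thesis by simp
  qed
qed

end

lemma connected_edge_leaving:
  assumes "connected_via G C" "2 \<le> card (verts G)" "v \<in> verts G"
  shows "\<exists>e\<in>C. \<exists>w. w \<noteq> v \<and> (ends G e = (v, w) \<or> ends G e = (w, v))"
proof (rule ccontr)
  assume none: "\<not> ?thesis"
  have stuck: "b = v" if "(a, b) \<in> adj_rel G C" "a = v" for a b
    using that none unfolding adj_rel_def by auto
  have "verts G \<noteq> {v}" using assms(2) by auto
  then obtain u where u: "u \<in> verts G" "u \<noteq> v" using assms(3) by blast
  then have "(v, u) \<in> (adj_rel G C)\<^sup>*" using assms(1,3) unfolding connected_via_def by blast
  then have "u = v" by (induction rule: rtrancl_induct) (auto dest: stuck)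
  then show False using u(2) by simp
qed

text \<open>A loop at v cannot lie on a hamiltonian cycle through a non-loop edge at v:
  it would give v valency at least 3 in the cycle.\<close>
lemma loop_not_on_cycle:
  assumes "finite C" "e \<in> C" "ends G e = (v, w) \<or> ends G e = (w, v)" "v \<noteq> w"
    and "valency_in G C v = 2" "ends G l = (v, v)"
  shows "l \<notin> C"
proof
  assume "l \<in> C"
  have "e \<noteq> l" using assms(3,4,6) by auto
  have "incidence G l v + incidence G e v = (\<Sum>x\<in>{l, e}. incidence G x v)"
    using \<open>e \<noteq> l\<close> by simp
  also have "\<dots> \<le> (\<Sum>x\<in>C. incidence G x v)"
    using \<open>l \<in> C\<close> assms(1,2) by (intro sum_mono2) auto
  also have "\<dots> = 2" using assms(5) valency_in_sum[OF assms(1), of G v] by simp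
  finally show False using assms(3,4,6) unfolding incidence_def by auto
qed

text \<open>If every edge at w outside C went to v,
  these N edges would give w valency 2 + |N| but v valency at least 2 + 2 + |N|.\<close>
lemma far_edge_exists:
  assumes fin: "finite E" and CE: "C \<subseteq> E" and v_ne_w: "v \<noteq> w"
    and cycle_v: "valency_in G C v = 2" and cycle_w: "valency_in G C w = 2"
    and loop: "l \<in> E - C" "ends G l = (v, v)"
    and equal: "valency_in G E v = valency_in G E w"
  shows "\<exists>h\<in>E - C. (fst (ends G h) = w \<or> snd (ends G h) = w) \<and> other_end G h w \<noteq> v"
proof (rule ccontr)
  assume none: "\<not> ?thesis"
  define N where "N = {x \<in> E - C. fst (ends G x) = w \<or> snd (ends G x) = w}"
  have fin_C: "finite C" and fin_N: "finite N"
    using fin CE finite_subset unfolding N_def by auto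
  have N_ends: "ends G x = (w, v) \<or> ends G x = (v, w)" if "x \<in> N" for x
  proof -
    have "other_end G x w = v" using that none unfolding N_def by auto
    then show ?thesis using that unfolding N_def other_end_def
      by (cases "ends G x") (auto split: if_splits)
  qed
  have N_w: "incidence G x w = 1" and N_v: "incidence G x v = 1" if "x \<in> N" for x
    using N_ends[OF that] v_ne_w unfolding incidence_def by fastforce+
  have "valency_in G E w = (\<Sum>x\<in>E - C. incidence G x w) + (\<Sum>x\<in>C. incidence G x w)"
    unfolding valency_in_sum[OF fin] by (rule sum.subset_diff[OF CE fin])
  also have "(\<Sum>x\<in>E - C. incidence G x w) = (\<Sum>x\<in>N. incidence G x w)"
    by (rule sum.mono_neutral_right) (use fin in \<open>auto simp: N_def incidence_def\<close>)
  also have "\<dots> = card N" using N_w by simp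
  finally have val_w: "valency_in G E w = card N + 2"
    using cycle_w by (simp add: valency_in_sum[OF fin_C])
  have l_N: "l \<notin> N" and disjoint: "C \<inter> insert l N = {}" and sub: "C \<union> insert l N \<subseteq> E"
    using loop v_ne_w CE unfolding N_def by auto
  have "(\<Sum>x\<in>C. incidence G x v) + (incidence G l v + (\<Sum>x\<in>N. incidence G x v))
      = (\<Sum>x\<in>C. incidence G x v) + (\<Sum>x\<in>insert l N. incidence G x v)"
    using fin_N l_N by simp
  also have "\<dots> = (\<Sum>x\<in>C \<union> insert l N. incidence G x v)"
    using fin_N by (intro sum.union_disjoint[OF fin_C _ disjoint, symmetric]) simp
  also have "\<dots> \<le> (\<Sum>x\<in>E. incidence G x v)" using sub fin by (intro sum_mono2) auto
  finally have "(\<Sum>x\<in>C. incidence G x v) + (incidence G l v + (\<Sum>x\<in>N. incidence G x v))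
      \<le> (\<Sum>x\<in>E. incidence G x v)" .
  moreover have "(\<Sum>x\<in>N. incidence G x v) = card N" using N_v by simp
  moreover have "incidence G l v = 2" using loop unfolding incidence_def by simp
  ultimately show False
    using val_w equal cycle_v by (simp add: valency_in_sum[OF fin] valency_in_sum[OF fin_C])
qed

lemma loop_shift_exists:
  assumes graph: "is_graph G" and reg: "regular p G" and ham: "hamiltonian G"
    and loop: "\<not> loopless G"
  shows "\<exists>G'. strongly_linked G G' \<and> is_graph G' \<and> regular p G' \<and> hamiltonian G' \<and>
    loop_count G' < loop_count G \<and> (three_edge_connected G \<longrightarrow> three_edge_connected G')"
proof -
  obtain l where l: "l \<in> edges G" "is_loop G l" using loop unfolding loopless_def by auto
  define v where "v = fst (ends G l)"
  have l_ends: "ends G l = (v, v)" using l(2) unfolding is_loop_def v_def by (cases "ends G l") auto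
  have fin: "finite (edges G)" and ends_in: "\<forall>x\<in>edges G. fst (ends G x) \<in> verts G \<and> snd (ends G x) \<in> verts G"
    using graph unfolding is_graph_def by auto
  then have v: "v \<in> verts G" using l(1) l_ends by force
  obtain C where C: "C \<subseteq> edges G" "connected_via G C" "\<forall>x\<in>verts G. valency_in G C x = 2"
    and two: "2 \<le> card (verts G)" using ham unfolding hamiltonian_def by auto
  obtain e w where e: "e \<in> C" "w \<noteq> v" "ends G e = (v, w) \<or> ends G e = (w, v)"
    using connected_edge_leaving[OF C(2) two v] by blast
  have w: "w \<in> verts G" using ends_in e(1,3) C(1) by force
  have "l \<notin> C"
    using loop_not_on_cycle[OF finite_subset[OF C(1) fin] e(1,3)] e(2) C(3) v l_ends by simp
  moreover have "valency_in G (edges G) v = valency_in G (edges G) w"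
    using reg v w unfolding regular_def valency_def by simp
  ultimately obtain h where h: "h \<in> edges G - C" "fst (ends G h) = w \<or> snd (ends G h) = w"
      "other_end G h w \<noteq> v"
    using far_edge_exists[OF fin C(1) e(2)[symmetric]] C(3) v w l(1) l_ends by blast
  interpret loop_shift G l e h v w
    using graph l(1) l_ends C(1) e h by unfold_locales auto
  show ?thesis
    using strongly_linked_shifted shifted_graph shifted_regular[OF reg] shifted_fewer_loops
      shifted_hamiltonian[OF two C(1) \<open>l \<notin> C\<close> _ C(2,3)] shifted_three_edge_connected h(1)
    by blast
qed

definition linking_step :: "('v, 'e) mgraph \<Rightarrow> ('v, 'e) mgraph \<Rightarrow> bool" where
  "linking_step G G' \<longleftrightarrow> is_graph G \<and> is_graph G' \<and> strongly_linked G G' \<and>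
     (three_edge_connected G \<longrightarrow> three_edge_connected G')"

lemma linking_chain_to_p_hamiltonian:
  "is_graph G \<Longrightarrow> regular p G \<Longrightarrow> hamiltonian G \<Longrightarrow>
     \<exists>H. linking_step\<^sup>*\<^sup>* G H \<and> p_hamiltonian p H"
proof (induction "loop_count G" arbitrary: G rule: less_induct)
  case less
  show ?case
  proof (cases "loopless G")
    case True
    then show ?thesis using less.prems unfolding p_hamiltonian_def by blast
  next
    case False
    then obtain G' where G': "strongly_linked G G'" "is_graph G'" "regular p G'" "hamiltonian G'"
        "loop_count G' < loop_count G" "three_edge_connected G \<longrightarrow> three_edge_connected G'"
      using loop_shift_exists less.prems by blast
    then obtain H where "linking_step\<^sup>*\<^sup>* G' H" "p_hamiltonian p H"
      using less.hyps by blast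
    moreover have "linking_step G G'" using G' less.prems(1) unfolding linking_step_def by blast
    ultimately show ?thesis by (blast intro: converse_rtranclp_into_rtranclp)
  qed
qed

lemma linking_chain_linked:
  assumes "is_graph G" "linking_step\<^sup>*\<^sup>* G H"
  shows "linked G H"
proof -
  have "is_graph H \<and> (\<lambda>A B. is_graph A \<and> is_graph B \<and> strongly_linked A B)\<^sup>*\<^sup>* G H"
    using assms(2,1) by (induction rule: rtranclp_induct)
      (auto simp: linking_step_def intro: rtranclp.rtrancl_into_rtrancl)
  then show ?thesis using assms(1) unfolding linked_def by blast
qed

lemma linking_chain_three_linked:
  assumes "is_graph G" "three_edge_connected G" "linking_step\<^sup>*\<^sup>* G H"
  shows "three_linked G H \<and> three_edge_connected H"
proof -
  have "is_graph H \<and> three_edge_connected H \<and>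
      (\<lambda>A B. is_graph A \<and> is_graph B \<and> three_edge_connected A \<and> three_edge_connected B \<and>
         strongly_linked A B)\<^sup>*\<^sup>* G H"
    using assms(3,1,2) by (induction rule: rtranclp_induct)
      (auto simp: linking_step_def intro: rtranclp.rtrancl_into_rtrancl)
  then show ?thesis using assms(1,2) unfolding three_linked_def by blast
qed

theorem mainTheorem3:
  fixes p :: nat and G :: "(nat, nat) mgraph"
  assumes "3 \<le> p" and "is_graph G" and "regular p G" and "hamiltonian G"
  shows "(\<exists>H. linked G H \<and> p_hamiltonian p H) \<and>
         (three_edge_connected G \<longrightarrow>
            (\<exists>H. three_linked G H \<and> three_edge_connected H \<and> p_hamiltonian p H))"
proof -
  obtain H where "linking_step\<^sup>*\<^sup>* G H" "p_hamiltonian p H"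
    using linking_chain_to_p_hamiltonian assms(2-4) by blast
  then show ?thesis
    using linking_chain_linked linking_chain_three_linked assms(2) by blast
qed

end
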